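(* Let $p\in(0,1)$ and $0<\alpha<\frac{p}{1-p}$. Let $E:\mathbb{R}_{\ge0}\to\mathbb{R}_{\ge0}$ be a proper error score such that the limits $\lim_{x\to\infty}\frac{E'(x)}{E(x)}$, $\lim_{x\to\infty}\frac{E(x)}{E(ax)}$ and $\lim_{x\to\infty}\frac{E'(x)}{E'(ax)}$ exist (in the extended reals) for every $a\in(0,1)$, and suppose there are constants $k,\nu>0$ with $E(x)\le k e^{-\nu x}$ for all $x\ge0$. Then $E$ is undulating (with respect to $p,\alpha$).
   Context: A proper error score is a function $E:\mathbb{R}_{\ge0}\to\mathbb{R}_{\ge0}$ that is twice differentiable, with $E(x)>0$ and $E'(x)<0$ for all $x\ge0$, $E(0)=c_0>0$, and $\lim_{x\to\infty}E(x)=0$. Given $p\in(0,1)$ and $0<\alpha<\frac{p}{1-p}$, an error score $E$ is undulating if there exist $z_1,z_2\in\mathbb{R}$ such that $\frac{E'(pm)}{E'(\alpha(1-p)m)}>\frac{\alpha(1-p)}{p}$ for all $m\ge 0$ with $m<z_1$, and $\frac{E'(pm)}{E'(\alpha(1-p)m)}<\frac{\alpha(1-p)}{p}$ for all $m>z_2$. *)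

theory Defs
  imports "HOL-Analysis.Analysis"
begin

definition proper_error_score :: "(real \<Rightarrow> real) \<Rightarrow> (real \<Rightarrow> real) \<Rightarrow> bool" where
  "proper_error_score E E' \<longleftrightarrow>
     (\<exists>E''. \<forall>x\<ge>0. (E has_real_derivative E' x) (at x within {0..}) \<and>
                    (E' has_real_derivative E'' x) (at x within {0..})) \<and>
     (\<forall>x\<ge>0. E x > 0 \<and> E' x < 0) \<and>
     E 0 > 0 \<and>
     (E \<longlongrightarrow> 0) at_top"

definition undulating :: "real \<Rightarrow> real \<Rightarrow> (real \<Rightarrow> real) \<Rightarrow> bool" where
  "undulating p \<alpha> E' \<longleftrightarrow>
     (\<exists>z1 z2::real.
        (\<forall>m. 0 \<le> m \<and> m < z1 \<longrightarrow> E' (p * m) / E' (\<alpha> * (1 - p) * m) > \<alpha> * (1 - p) / p) \<and>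
        (\<forall>m. m > z2 \<longrightarrow> E' (p * m) / E' (\<alpha> * (1 - p) * m) < \<alpha> * (1 - p) / p))"

end

theory Submission
  imports Defs
begin

text \<open>Put \<open>a = \<alpha>(1-p)/p\<close>, so \<open>0 < a < 1\<close> and \<open>\<alpha>(1-p)m = a(pm)\<close>; undulation then compares
  \<open>E'(y)/E'(ay)\<close> with \<open>a\<close>. Near \<open>y = 0\<close> this ratio tends to \<open>1 > a\<close> by continuity of \<open>E'\<close>.
  For large \<open>y\<close> its limit must vanish: if it stayed above some \<open>c > 0\<close>, then
  \<open>aE(y) - cE(ay)\<close> would be eventually nonincreasing with limit \<open>0\<close>, hence nonnegative,
  so \<open>E(ay) \<le> (a/c)E(y)\<close>. Iterating along \<open>y, y/a, y/a\<^sup>2, \<dots>\<close> shows that \<open>E\<close> decays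
  only polynomially, contradicting the exponential bound.\<close>

lemma dilation_bound_of_derivative_bound:
  fixes E E' :: "real \<Rightarrow> real" and a c X0 x :: real
  assumes "0 < a" "0 < X0" "X0 \<le> x"
    and der: "\<And>y. 0 < y \<Longrightarrow> (E has_real_derivative E' y) (at y)"
    and lim: "(E \<longlongrightarrow> 0) at_top"
    and bound: "\<And>y. X0 \<le> y \<Longrightarrow> E' y \<le> c * E' (a * y)"
  shows "c * E (a * x) \<le> a * E x"
proof -
  define h where "h y = a * E y - c * E (a * y)" for y
  have h_deriv: "(h has_real_derivative a * E' y - c * (E' (a * y) * a)) (at y)" if "0 < y" for y
  proof -
    have "((\<lambda>y. E (a * y)) has_real_derivative E' (a * y) * a) (at y)"
      by (rule DERIV_chain2[OF der]) (use \<open>0 < a\<close> that in \<open>auto intro!: derivative_eq_intros\<close>)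
    then show ?thesis
      unfolding h_def by (auto intro!: derivative_eq_intros der that)
  qed
  have h_antimono: "h z \<le> h y" if "X0 \<le> y" "y \<le> z" for y z
  proof (rule DERIV_nonpos_imp_nonincreasing[OF that(2)])
    fix t assume "y \<le> t" "t \<le> z"
    with that have "X0 \<le> t" by linarith
    then have "a * E' t - c * (E' (a * t) * a) \<le> 0"
      using bound[of t] \<open>0 < a\<close> by (simp add: algebra_simps mult_left_mono)
    with h_deriv[of t] \<open>0 < X0\<close> \<open>X0 \<le> t\<close>
    show "\<exists>d. (h has_real_derivative d) (at t) \<and> d \<le> 0" by auto
  qed
  have "((\<lambda>y. E (a * y)) \<longlongrightarrow> 0) at_top"
    by (rule filterlim_compose[OF lim filterlim_tendsto_pos_mult_at_top[OF tendsto_const \<open>0 < a\<close> filterlim_ident]])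
  then have "(h \<longlongrightarrow> 0) at_top"
    unfolding h_def using tendsto_diff[OF tendsto_mult_right_zero[OF lim] tendsto_mult_right_zero] by simp
  moreover have "\<forall>\<^sub>F y in at_top. h y \<le> h x"
    using eventually_ge_at_top[of x] by eventually_elim (use h_antimono \<open>X0 \<le> x\<close> in auto)
  ultimately have "0 \<le> h x"
    by (rule tendsto_le[OF trivial_limit_at_top_linorder tendsto_const])
  then show ?thesis unfolding h_def by simp
qed

lemma dilation_bound_iterate:
  fixes E :: "real \<Rightarrow> real" and a K X0 X :: real
  assumes "0 < a" "a \<le> 1" "0 \<le> K" "0 \<le> X" "X0 \<le> X"
    and dilation: "\<And>x. X0 \<le> x \<Longrightarrow> E (a * x) \<le> K * E x"
  shows "E X \<le> K ^ n * E (X / a ^ n)"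
proof (induction n)
  case 0
  then show ?case by simp
next
  case (Suc n)
  have "X \<le> X / a ^ Suc n"
  proof -
    have "a ^ Suc n \<le> 1" using assms(1,2) by (intro power_le_one) auto
    then show ?thesis
      using assms(1,4) by (simp add: le_divide_eq mult_left_le del: power_Suc)
  qed
  then have "E (X / a ^ n) \<le> K * E (X / a ^ Suc n)"
    using dilation[of "X / a ^ Suc n"] \<open>X0 \<le> X\<close> \<open>0 < a\<close> by simp
  then have "K ^ n * E (X / a ^ n) \<le> K ^ n * (K * E (X / a ^ Suc n))"
    using \<open>0 \<le> K\<close> by (intro mult_left_mono) auto
  with Suc.IH show ?case by (simp add: mult_ac)
qed

lemma dilation_bound_contradicts_exponential_decay:
  fixes E :: "real \<Rightarrow> real" and a K X0 k \<nu> :: real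
  assumes "0 < a" "a < 1" "1 \<le> K" "0 < \<nu>"
    and dilation: "\<And>x. X0 \<le> x \<Longrightarrow> E (a * x) \<le> K * E x"
    and pos: "\<And>x. 0 \<le> x \<Longrightarrow> 0 < E x"
    and decay: "\<forall>x\<ge>0. E x \<le> k * exp (- \<nu> * x)"
  shows False
proof -
  define b where "b = 1 / a"
  have "1 < b" using assms(1,2) unfolding b_def by simp
  define X where "X = max X0 (max 1 ((ln K + 1) / (\<nu> * (b - 1))))"
  have "X0 \<le> X" "1 \<le> X" and X_large: "(ln K + 1) / (\<nu> * (b - 1)) \<le> X"
    unfolding X_def by auto
  have "0 < k"
    using pos[of 0] decay by (metis exp_gt_zero order_less_le_trans zero_less_mult_pos2 order_refl)
  have "E X \<le> k * exp (- real n)" for n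
  proof -
    have "real n * (ln K + 1) \<le> real n * (\<nu> * X * (b - 1))"
      using X_large \<open>0 < \<nu>\<close> \<open>1 < b\<close>
      by (intro mult_left_mono) (simp_all add: divide_le_eq mult_ac)
    also have "\<dots> \<le> \<nu> * X * (1 + real n * (b - 1))"
      using \<open>0 < \<nu>\<close> \<open>1 \<le> X\<close> by (simp add: algebra_simps)
    also have "\<dots> \<le> \<nu> * (X * b ^ n)"
      using Bernoulli_inequality[of "b - 1" n] \<open>1 < b\<close> \<open>0 < \<nu>\<close> \<open>1 \<le> X\<close> by (simp add: mult_left_mono)
    finally have exponent: "real n * (ln K + 1) \<le> \<nu> * (X * b ^ n)" .
    have "E X \<le> K ^ n * E (X * b ^ n)"
      using dilation_bound_iterate[of a K X X0 E n] assms(1-3) dilation \<open>1 \<le> X\<close> \<open>X0 \<le> X\<close>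
      unfolding b_def by (simp add: power_one_over)
    also have "\<dots> \<le> K ^ n * (k * exp (- \<nu> * (X * b ^ n)))"
      using decay \<open>1 \<le> X\<close> \<open>1 < b\<close> \<open>1 \<le> K\<close> by (intro mult_left_mono) auto
    also have "\<dots> \<le> exp (real n * ln K) * (k * exp (- (real n * (ln K + 1))))"
      using exponent \<open>0 < k\<close> \<open>1 \<le> K\<close> by (intro mult_mono) (auto simp: exp_of_nat_mult)
    also have "\<dots> = k * exp (- real n)"
      by (simp add: exp_add[symmetric] algebra_simps)
    finally show ?thesis .
  qed
  moreover have "0 < E X" using pos \<open>1 \<le> X\<close> by simp
  moreover obtain n :: nat where "k / E X < real n" using reals_Archimedean2 by blast
  ultimately have "E X * exp (real n) \<le> k" "k < E X * real n"
    by (auto simp: exp_minus field_simps)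
  moreover have "E X * real n \<le> E X * exp (real n)"
    using \<open>0 < E X\<close> exp_ge_add_one_self[of "real n"] by (intro mult_left_mono) linarith+
  ultimately show False by linarith
qed

lemma derivative_ratio_limit_eq_zero_of_exponential_decay:
  fixes E E' :: "real \<Rightarrow> real" and a k \<nu> :: real and L :: ereal
  assumes "0 < a" "a < 1" "0 < \<nu>"
    and der: "\<And>x. 0 < x \<Longrightarrow> (E has_real_derivative E' x) (at x)"
    and pos: "\<And>x. 0 \<le> x \<Longrightarrow> 0 < E x"
    and neg: "\<And>x. 0 \<le> x \<Longrightarrow> E' x < 0"
    and lim: "(E \<longlongrightarrow> 0) at_top"
    and decay: "\<forall>x\<ge>0. E x \<le> k * exp (- \<nu> * x)"
    and ratio: "((\<lambda>x. ereal (E' x / E' (a * x))) \<longlongrightarrow> L) at_top"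
  shows "L = 0"
proof (rule antisym)
  have "\<forall>\<^sub>F x in at_top. 0 \<le> ereal (E' x / E' (a * x))"
    using eventually_ge_at_top[of 0]
  proof eventually_elim
    case (elim x)
    then have "E' x < 0" "E' (a * x) < 0" using neg \<open>0 < a\<close> by simp_all
    then show ?case by (simp add: divide_nonpos_neg)
  qed
  then show "0 \<le> L"
    by (rule tendsto_le[OF trivial_limit_at_top_linorder ratio tendsto_const])
  show "L \<le> 0"
  proof (rule ccontr)
    assume "\<not> L \<le> 0"
    then obtain c where "0 < c" "ereal c < L"
      using ereal_dense2[of 0 L] by (auto simp: not_le)
    define c' where "c' = min c a"
    have "0 < c'" "c' \<le> a" using \<open>0 < c\<close> \<open>0 < a\<close> unfolding c'_def by auto
    have "ereal c' < L"
      using \<open>ereal c < L\<close> unfolding c'_def by (meson ereal_less_eq(3) min.cobounded1 order_le_less_trans)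
    from order_tendstoD(1)[OF ratio this]
    obtain X1 where X1: "\<And>x. X1 \<le> x \<Longrightarrow> c' < E' x / E' (a * x)"
      unfolding eventually_at_top_linorder by auto
    define X0 where "X0 = max X1 1"
    have derivative_bound: "E' x \<le> c' * E' (a * x)" if "X0 \<le> x" for x
    proof -
      have "E' (a * x) < 0" using neg \<open>0 < a\<close> that unfolding X0_def by simp
      with X1[of x] that show ?thesis
        unfolding X0_def by (simp add: less_divide_eq)
    qed
    have "E (a * x) \<le> a / c' * E x" if "X0 \<le> x" for x
      using dilation_bound_of_derivative_bound[OF \<open>0 < a\<close> _ that der lim derivative_bound]
        \<open>0 < c'\<close> unfolding X0_def by (simp add: field_simps)
    moreover have "1 \<le> a / c'" using \<open>0 < c'\<close> \<open>c' \<le> a\<close> by simp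
    ultimately show False
      using dilation_bound_contradicts_exponential_decay[OF \<open>0 < a\<close> \<open>a < 1\<close> _ \<open>0 < \<nu>\<close>]
        pos decay by blast
  qed
qed

lemma derivative_ratio_gt_near_zero:
  fixes E' :: "real \<Rightarrow> real" and r s a :: real
  assumes "continuous_on {0..} E'" "\<And>x. 0 \<le> x \<Longrightarrow> E' x \<noteq> 0"
    and "0 \<le> r" "0 \<le> s" "a < 1"
  shows "\<exists>z>0. \<forall>m. 0 \<le> m \<and> m < z \<longrightarrow> a < E' (r * m) / E' (s * m)"
proof -
  define f where "f m = E' (r * m) / E' (s * m)" for m
  have "continuous_on {0..} f"
    unfolding f_def using assms
    by (auto intro!: continuous_intros continuous_on_compose2[OF assms(1)])
  then have "(f \<longlongrightarrow> f 0) (at 0 within {0..})"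
    by (simp add: continuous_on_def)
  moreover have "a < f 0" using assms(2)[of 0] \<open>a < 1\<close> by (simp add: f_def)
  ultimately have "\<forall>\<^sub>F m in at 0 within {0..}. a < f m"
    by (rule order_tendstoD(1))
  then obtain z where "0 < z" and z: "\<And>m. 0 \<le> m \<Longrightarrow> m \<noteq> 0 \<Longrightarrow> dist m 0 < z \<Longrightarrow> a < f m"
    unfolding eventually_at by auto
  have "a < f m" if "0 \<le> m" "m < z" for m
    using z[of m] that \<open>a < f 0\<close> by (cases "m = 0") auto
  with \<open>0 < z\<close> show ?thesis unfolding f_def by blast
qed

lemma proper_error_scoreD:
  fixes E E' :: "real \<Rightarrow> real"
  assumes "proper_error_score E E'"
  shows proper_error_score_deriv: "\<And>x. 0 < x \<Longrightarrow> (E has_real_derivative E' x) (at x)"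
    and proper_error_score_continuous_deriv: "continuous_on {0..} E'"
    and proper_error_score_pos: "\<And>x. 0 \<le> x \<Longrightarrow> 0 < E x"
    and proper_error_score_deriv_neg: "\<And>x. 0 \<le> x \<Longrightarrow> E' x < 0"
    and proper_error_score_tendsto_zero: "(E \<longlongrightarrow> 0) at_top"
proof -
  obtain E'' where deriv: "\<And>x. 0 \<le> x \<Longrightarrow> (E has_real_derivative E' x) (at x within {0..})"
    and deriv2: "\<And>x. 0 \<le> x \<Longrightarrow> (E' has_real_derivative E'' x) (at x within {0..})"
    using assms unfolding proper_error_score_def by blast
  show "(E has_real_derivative E' x) (at x)" if "0 < x" for x
    using deriv[of x] that at_within_interior[of x "{0..}"] by simp
  show "continuous_on {0..} E'"
    using deriv2 by (auto simp: continuous_on_eq_continuous_within intro: DERIV_continuous)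
  show "0 < E x" "E' x < 0" if "0 \<le> x" for x
    using assms that unfolding proper_error_score_def by auto
  show "(E \<longlongrightarrow> 0) at_top"
    using assms unfolding proper_error_score_def by blast
qed

text \<open>Only the limit of \<open>E'(x)/E'(ax)\<close> and the exponential bound are needed.\<close>

theorem corollary1:
  fixes E E' :: "real \<Rightarrow> real" and p \<alpha> k \<nu> :: real
  assumes "0 < p" "p < 1" "0 < \<alpha>" "\<alpha> < p / (1 - p)"
    and "proper_error_score E E'"
    and "\<exists>L::ereal. ((\<lambda>x. ereal (E' x / E x)) \<longlongrightarrow> L) at_top"
    and "\<forall>a. 0 < a \<and> a < 1 \<longrightarrow> (\<exists>L::ereal. ((\<lambda>x. ereal (E x / E (a * x))) \<longlongrightarrow> L) at_top)"
    and "\<forall>a. 0 < a \<and> a < 1 \<longrightarrow> (\<exists>L::ereal. ((\<lambda>x. ereal (E' x / E' (a * x))) \<longlongrightarrow> L) at_top)"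
    and "0 < k" "0 < \<nu>" "\<forall>x\<ge>0. E x \<le> k * exp (- \<nu> * x)"
  shows "undulating p \<alpha> E'"
proof -
  define a where "a = \<alpha> * (1 - p) / p"
  have "0 < a" "a < 1"
    unfolding a_def using assms(1-4) by (simp_all add: field_simps)
  have rescale: "\<alpha> * (1 - p) * m = a * (p * m)" for m
    unfolding a_def using \<open>0 < p\<close> by simp
  obtain L where L: "((\<lambda>x. ereal (E' x / E' (a * x))) \<longlongrightarrow> L) at_top"
    using assms(8) \<open>0 < a\<close> \<open>a < 1\<close> by blast
  have "L = 0"
    using derivative_ratio_limit_eq_zero_of_exponential_decay[OF \<open>0 < a\<close> \<open>a < 1\<close> \<open>0 < \<nu>\<close> _ _ _ _ assms(11) L]
      proper_error_scoreD[OF assms(5)] by blast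
  then have "\<forall>\<^sub>F x in at_top. E' x / E' (a * x) < a"
    using order_tendstoD(2)[OF L, of a] \<open>0 < a\<close> by simp
  then have "\<forall>\<^sub>F m in at_top. E' (p * m) / E' (a * (p * m)) < a"
    using filterlim_tendsto_pos_mult_at_top[OF tendsto_const \<open>0 < p\<close> filterlim_ident]
    by (rule eventually_compose_filterlim)
  then obtain z2 where "\<forall>m > z2. E' (p * m) / E' (\<alpha> * (1 - p) * m) < \<alpha> * (1 - p) / p"
    unfolding eventually_at_top_dense rescale a_def by blast
  moreover obtain z1 where "\<forall>m. 0 \<le> m \<and> m < z1 \<longrightarrow> \<alpha> * (1 - p) / p < E' (p * m) / E' (\<alpha> * (1 - p) * m)"
    using derivative_ratio_gt_near_zero[of E' p "\<alpha> * (1 - p)" a] \<open>a < 1\<close> assms(1-3)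
      proper_error_scoreD(2,4)[OF assms(5)] unfolding a_def by fastforce
  ultimately show ?thesis
    unfolding undulating_def by blast
qed

end
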